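(* Let $\delta\in(0,1)$, and for $w\in A^*$ with $\min_{1\le\ell\le L}N_{n-1,\ell}(w)>0$ and $\ell=1,\dots,L$ let $\mathrm{conf}^I_\ell(w)=c_\ell\big(w,\frac{\delta}{n^2|\mathcal S|L}\big)$. If the confidence radius is set to $\mathrm{conf}_\ell(w)=\min\{\mathrm{conf}^I_\ell(w),1\}$, then with probability at least $1-\delta$ the event $\mathrm{Good}_\infty$ occurs.
   Context: $A$ is a finite alphabet; $A^{-1}_{-\infty}$ is the set of left-infinite sequences $x=\cdots x_{-2}x_{-1}$ over $A$, and $A^*$ the set of finite strings (including the empty string) and left-infinite sequences. For $\ell=1,\dots,L$, $X(\ell)=(X_t(\ell))_{t\in\mathbb Z}$ is a stationary ergodic $A$-valued process with transition probabilities $p_\ell(a\mid x)=\Pr(X_0(\ell)=a\mid X^{-1}_{-\infty}(\ell)=x)$; one observes $X_1^n(\ell)$ for each $\ell$. For a finite string $w$, $N_{j,\ell}(w)$ is the number of occurrences of $w$ as a block of consecutive symbols in $X_1^j(\ell)$ (0 for infinite $w$); $wa$ is concatenation. For $w$ with $\min_\ell N_{n-1,\ell}(w)>0$ and $S\subseteq A$: $\hat p_{n,\ell}(S\mid w)=\sum_{a\in S}N_{n,\ell}(wa)/N_{n-1,\ell}(w)$ and $\bar p_{n,\ell}(S\mid w)=\frac{1}{N_{n-1,\ell}(w)}\sum_{i=|w|+1}^{n}\mathbf 1\{X^{i-1}_{i-|w|}(\ell)=w\}p_\ell(S\mid X^{i-1}_{-\infty}(\ell))$. The family $\mathcal S$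 is either $\{\{a\}:a\in A\}$ or $2^A$, and every $d_\ell$ is $d_\ell(q,q')=\max_{S\in\mathcal S}|q(S)-q'(S)|$. For $w$ with $N_{n-1,\ell}(w)>0$ and $\epsilon\in(0,1)$, $c_\ell(w,\epsilon)=2\sqrt{\frac{1}{N_{n-1,\ell}(w)}}\sqrt{\log(1/\epsilon)+2\log(2+2\log N_{n-1,\ell}(w))}$. For $v\in\mathbb R^L$, $\|v\|_{L,\infty}=\max_\ell|v_\ell|$. The event $\mathrm{Good}_\infty$: for every $w\in A^*$ with $\min_\ell N_{n-1,\ell}(w)>0$, $\max_{\ell}d_\ell(\bar p_{n,\ell}(\cdot\mid w),\hat p_{n,\ell}(\cdot\mid w))/\mathrm{conf}_\ell(w)\le1$. *)

theory Defs
  imports "HOL-Probability.Probability"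
begin

text \<open>Processes: X l t w is the value X_t(l) at time t (integer) in outcome w.
  A left-infinite sequence x = ... x_{-2} x_{-1} is encoded as a function nat => 'a
  with (enc x) k = x_{-(k+1)}, i.e. index 0 is the most recent symbol.
  Finite strings are lists in time order (left to right).\<close>

definition seqM :: "(int \<Rightarrow> 'a) measure" where
  "seqM = PiM UNIV (\<lambda>_. count_space UNIV)"

definition pastM :: "(nat \<Rightarrow> 'a) measure" where
  "pastM = PiM UNIV (\<lambda>_. count_space UNIV)"

definition path :: "(nat \<Rightarrow> int \<Rightarrow> 'b \<Rightarrow> 'a) \<Rightarrow> nat \<Rightarrow> 'b \<Rightarrow> int \<Rightarrow> 'a" where
  "path X l \<omega> = (\<lambda>t. X l t \<omega>)"

definition past :: "(nat \<Rightarrow> int \<Rightarrow> 'b \<Rightarrow> 'a) \<Rightarrow> nat \<Rightarrow> int \<Rightarrow> 'b \<Rightarrow> nat \<Rightarrow> 'a" where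
  "past X l i \<omega> = (\<lambda>k. X l (i - 1 - int k) \<omega>)"

definition shift :: "(int \<Rightarrow> 'a) \<Rightarrow> int \<Rightarrow> 'a" where
  "shift x = (\<lambda>t. x (t + 1))"

definition stationary_ergodic ::
  "'b measure \<Rightarrow> (nat \<Rightarrow> int \<Rightarrow> 'b \<Rightarrow> 'a) \<Rightarrow> nat \<Rightarrow> bool" where
  "stationary_ergodic M X l \<longleftrightarrow>
     (\<forall>t. X l t \<in> measurable M (count_space UNIV)) \<and>
     distr M seqM (\<lambda>\<omega>. shift (path X l \<omega>)) = distr M seqM (path X l) \<and>
     (\<forall>B \<in> sets seqM. shift -` B = B \<longrightarrow>
        emeasure (distr M seqM (path X l)) B \<in> {0, 1})"

text \<open>p l x a = Pr(X_0(l) = a | X^{-1}_{-\<infinity>}(l) = x), a (regular) version of the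
  conditional distribution of X_0(l) given its infinite past.\<close>
definition is_transition_prob ::
  "'b measure \<Rightarrow> (nat \<Rightarrow> int \<Rightarrow> 'b \<Rightarrow> 'a::finite) \<Rightarrow> nat \<Rightarrow> ((nat \<Rightarrow> 'a) \<Rightarrow> 'a \<Rightarrow> real) \<Rightarrow> bool" where
  "is_transition_prob M X l p \<longleftrightarrow>
     (\<forall>x a. 0 \<le> p x a) \<and> (\<forall>x. (\<Sum>a\<in>UNIV. p x a) = 1) \<and>
     (\<forall>a. (\<lambda>x. p x a) \<in> borel_measurable pastM) \<and>
     (\<forall>a. \<forall>B \<in> sets pastM.
        measure M {\<omega> \<in> space M. X l 0 \<omega> = a \<and> past X l 0 \<omega> \<in> B}
        = (\<integral>\<omega>. indicator B (past X l 0 \<omega>) * p (past X l 0 \<omega>) a \<partial>M))"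

definition pset :: "((nat \<Rightarrow> 'a) \<Rightarrow> 'a \<Rightarrow> real) \<Rightarrow> 'a set \<Rightarrow> (nat \<Rightarrow> 'a) \<Rightarrow> real" where
  "pset p S x = (\<Sum>a\<in>S. p x a)"

definition occ_at :: "(nat \<Rightarrow> int \<Rightarrow> 'b \<Rightarrow> 'a) \<Rightarrow> nat \<Rightarrow> 'b \<Rightarrow> 'a list \<Rightarrow> nat \<Rightarrow> bool" where
  "occ_at X l \<omega> w i \<longleftrightarrow>
     (\<forall>k < length w. X l (int i - int (length w) + 1 + int k) \<omega> = w ! k)"

text \<open>N_{j,l}(w): number of occurrences of w as a block in X_1^j(l)
  (the empty string occurs j+1 times, so that N_{n-1,l}([]) = n).\<close>
definition Ncount :: "(nat \<Rightarrow> int \<Rightarrow> 'b \<Rightarrow> 'a) \<Rightarrow> nat \<Rightarrow> 'b \<Rightarrow> nat \<Rightarrow> 'a list \<Rightarrow> nat" where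
  "Ncount X l \<omega> j w = card {i \<in> {length w..j}. occ_at X l \<omega> w i}"

definition phat ::
  "(nat \<Rightarrow> int \<Rightarrow> 'b \<Rightarrow> 'a) \<Rightarrow> nat \<Rightarrow> nat \<Rightarrow> 'b \<Rightarrow> 'a list \<Rightarrow> 'a set \<Rightarrow> real" where
  "phat X n l \<omega> w S =
     (\<Sum>a\<in>S. real (Ncount X l \<omega> n (w @ [a]))) / real (Ncount X l \<omega> (n - 1) w)"

definition pbar ::
  "(nat \<Rightarrow> int \<Rightarrow> 'b \<Rightarrow> 'a) \<Rightarrow> (nat \<Rightarrow> (nat \<Rightarrow> 'a) \<Rightarrow> 'a \<Rightarrow> real) \<Rightarrow> nat \<Rightarrow> nat \<Rightarrow> 'b
     \<Rightarrow> 'a list \<Rightarrow> 'a set \<Rightarrow> real" where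
  "pbar X p n l \<omega> w S =
     (1 / real (Ncount X l \<omega> (n - 1) w)) *
     (\<Sum>i = length w + 1..n.
        (if occ_at X l \<omega> w (i - 1) then 1 else 0) * pset (p l) S (past X l (int i) \<omega>))"

definition dist_fam :: "'a set set \<Rightarrow> ('a set \<Rightarrow> real) \<Rightarrow> ('a set \<Rightarrow> real) \<Rightarrow> real" where
  "dist_fam Sfam q q' = Max ((\<lambda>S. \<bar>q S - q' S\<bar>) ` Sfam)"

definition cfun :: "nat \<Rightarrow> real \<Rightarrow> real" where
  "cfun N \<epsilon> = 2 * sqrt (1 / real N) * sqrt (ln (1 / \<epsilon>) + 2 * ln (2 + 2 * ln (real N)))"

definition conf ::
  "(nat \<Rightarrow> int \<Rightarrow> 'b \<Rightarrow> 'a) \<Rightarrow> nat \<Rightarrow> nat \<Rightarrow> real \<Rightarrow> 'a set set \<Rightarrow> nat \<Rightarrow> 'b \<Rightarrow> 'a list \<Rightarrow> real" where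
  "conf X n L \<delta> Sfam l \<omega> w =
     min (cfun (Ncount X l \<omega> (n - 1) w) (\<delta> / (real n ^ 2 * real (card Sfam) * real L))) 1"

definition Good_inf ::
  "(nat \<Rightarrow> int \<Rightarrow> 'b \<Rightarrow> 'a) \<Rightarrow> (nat \<Rightarrow> (nat \<Rightarrow> 'a) \<Rightarrow> 'a \<Rightarrow> real) \<Rightarrow> nat \<Rightarrow> nat \<Rightarrow> real
     \<Rightarrow> 'a set set \<Rightarrow> 'b \<Rightarrow> bool" where
  "Good_inf X p n L \<delta> Sfam \<omega> \<longleftrightarrow>
     (\<forall>w :: 'a list. (\<forall>l \<in> {1..L}. Ncount X l \<omega> (n - 1) w > 0) \<longrightarrow>
        Max ((\<lambda>l. dist_fam Sfam (pbar X p n l \<omega> w) (phat X n l \<omega> w)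
                   / conf X n L \<delta> Sfam l \<omega> w) ` {1..L}) \<le> 1)"

end

theory Submission
  imports Defs
begin

text \<open>Fix a process \<open>l\<close>, a set \<open>S\<close>, a word \<open>w\<close> and a sign. With \<open>D\<^sub>i\<close> the indicator that \<open>w\<close>
  ends at time \<open>i - 1\<close>, the product over \<open>i \<le> n\<close> of
  \<open>exp (t D\<^sub>i (1\<^sub>S(X\<^sub>i) - p(S | X\<^sup>i\<^sup>-\<^sup>1\<^sub>-\<^sub>\<infinity>)) - t\<^sup>2 D\<^sub>i / 8)\<close> has expectation at most 1: conditionally on the
  past, each factor has mean at most 1 by Hoeffding's lemma, and stationarity moves the
  conditioning to time 0, where it is given by the transition probabilities. If \<open>w\<close> violates the
  confidence bound with radius \<open>c = c\<^sub>l(w, \<epsilon>)\<close>, then for \<open>t = \<plusminus>4c\<close> this product is at least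
  \<open>exp (2 c\<^sup>2 N)\<close>, an event of probability at most \<open>exp (-2 c\<^sup>2 N) \<le> \<epsilon>\<^sup>8 / 2\<^sup>1\<^sup>6\<close> by Markov's
  inequality. There are infinitely many words, but \<open>D\<^sub>i\<close> is a function of the past determined by
  the first occurrence \<open>e\<close> of \<open>w\<close> and by \<open>|w|\<close> alone, so a union bound over the at most
  \<open>2 n\<^sup>3 |\<S>| L\<close> choices of \<open>(l, S, e, |w|, N, sign)\<close> gives total failure probability at most \<open>\<delta>\<close>.\<close>

lemma space_pastM [simp]: "space pastM = UNIV"
  by (simp add: pastM_def space_PiM)

lemma space_seqM [simp]: "space seqM = UNIV"
  by (simp add: seqM_def space_PiM)

lemma measurable_pastM_coord [measurable]: "(\<lambda>x. x j) \<in> measurable pastM (count_space UNIV)"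
  unfolding pastM_def by (rule measurable_component_singleton) simp

lemma measurable_seqM_coord [measurable]: "(\<lambda>x. x j) \<in> measurable seqM (count_space UNIV)"
  unfolding seqM_def by (rule measurable_component_singleton) simp

lemma measurable_into_pastM:
  assumes "\<And>k. (\<lambda>w. f w k) \<in> measurable N (count_space UNIV)"
  shows "f \<in> measurable N pastM"
proof -
  have "(\<lambda>w k. f w k) \<in> measurable N pastM"
    unfolding pastM_def by (rule measurable_PiM_single') (use assms in auto)
  then show ?thesis by simp
qed

lemma measurable_into_seqM:
  assumes "\<And>k. (\<lambda>w. f w k) \<in> measurable N (count_space UNIV)"
  shows "f \<in> measurable N seqM"
proof -
  have "(\<lambda>w k. f w k) \<in> measurable N seqM"
    unfolding seqM_def by (rule measurable_PiM_single') (use assms in auto)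
  then show ?thesis by simp
qed

lemma measurable_shift_seqM [measurable]: "shift \<in> measurable seqM seqM"
  unfolding shift_def by (rule measurable_into_seqM) simp

lemma measurable_shift_past: "(\<lambda>x k. x (k + c)) \<in> measurable pastM pastM"
  by (rule measurable_into_pastM) simp

lemma pred_pastM_coord_eq: "Measurable.pred pastM (\<lambda>x::nat \<Rightarrow> 'a::countable. x i = x j)"
proof -
  have "{x::nat \<Rightarrow> 'a \<in> space pastM. x i = x j}
      = (\<Union>v. {x \<in> space pastM. x i = v} \<inter> {x \<in> space pastM. x j = v})"
    by auto
  also have "\<dots> \<in> sets pastM"
    by (intro sets.countable_UN' sets.Int) (auto intro: pred_count_space_const1[unfolded pred_def])
  finally show ?thesis unfolding pred_def .
qed

lemma funpow_shift: "(shift ^^ i) x = (\<lambda>t. x (t + int i))"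
  by (induction i) (auto simp: shift_def algebra_simps)

section \<open>Hoeffding's lemma for a two-point distribution\<close>

lemma hoeffding_two_point:
  fixes q t :: real
  assumes "0 \<le> q" "q \<le> 1"
  shows "q * exp (t * (1 - q)) + (1 - q) * exp (- t * q) \<le> exp (t\<^sup>2 / 8)"
proof -
  have nonneg_case: "q * exp (h * (1 - q)) + (1 - q) * exp (- h * q) \<le> exp (h\<^sup>2 / 8)"
    if "0 \<le> q" "q \<le> 1" "0 \<le> h" for q h :: real
  proof -
    have pos: "1 + q * (exp h - 1) > 0"
      using that by (simp add: add_pos_nonneg)
    have "q * exp (h * (1 - q)) + (1 - q) * exp (- h * q) = exp (- h * q) * (1 + q * (exp h - 1))"
      by (simp add: algebra_simps exp_add[symmetric])
    also have "\<dots> = exp (- h * q + ln (1 + q * (exp h - 1)))"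
      using pos by (simp only: exp_add exp_ln)
    also have "\<dots> \<le> exp (h\<^sup>2 / 8)"
      using Hoeffdings_lemma_aux[of h q] that by simp
    finally show ?thesis .
  qed
  show ?thesis
  proof (cases "t \<ge> 0")
    case True
    then show ?thesis using nonneg_case[of q t] assms by simp
  next
    case False
    have "(1 - q) * exp ((- t) * (1 - (1 - q))) + (1 - (1 - q)) * exp (- (- t) * (1 - q))
        \<le> exp ((- t)\<^sup>2 / 8)"
      using False assms by (intro nonneg_case) auto
    then show ?thesis by (simp add: algebra_simps)
  qed
qed

lemma cfun_measurable:
  assumes [measurable]: "(\<lambda>x. real (f x)) \<in> borel_measurable N"
  shows "(\<lambda>x. cfun (f x) \<epsilon>) \<in> borel_measurable N"
  unfolding cfun_def by measurable

lemma
  assumes k: "1 \<le> k" and \<epsilon>: "0 < \<epsilon>" "\<epsilon> < 1"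
  shows cfun_pos: "0 < cfun k \<epsilon>"
    and exp_cfun_le: "exp (- (2 * (cfun k \<epsilon>)\<^sup>2 * real k)) \<le> \<epsilon> ^ 8 / 65536"
proof -
  define V where "V = ln (1 / \<epsilon>) + 2 * ln (2 + 2 * ln (real k))"
  have "0 \<le> ln (real k)"
    using k by simp
  then have "ln 2 \<le> ln (2 + 2 * ln (real k))"
    by simp
  then have V: "ln (1 / \<epsilon>) + 2 * ln 2 \<le> V"
    unfolding V_def by simp
  moreover have "0 < ln (1 / \<epsilon>)"
    using \<epsilon> by simp
  ultimately have V_pos: "0 < V"
    using ln_gt_zero[of "2::real"] by linarith
  have c: "cfun k \<epsilon> = 2 * sqrt (1 / real k) * sqrt V"
    by (simp add: cfun_def V_def)
  show "0 < cfun k \<epsilon>"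
    unfolding c using V_pos k by simp
  have "2 * (cfun k \<epsilon>)\<^sup>2 * real k = 8 * V"
    unfolding c using V_pos k by (simp add: power_mult_distrib)
  then have "exp (- (2 * (cfun k \<epsilon>)\<^sup>2 * real k)) = exp (- 8 * V)"
    by simp
  also have "\<dots> \<le> exp (real 8 * ln \<epsilon> + real 16 * ln (1/2))"
    using V \<epsilon> by (simp add: ln_div)
  also have "\<dots> = \<epsilon> ^ 8 / 65536"
    by (simp only: exp_add exp_of_nat_mult exp_ln \<epsilon>) (simp add: power_divide)
  finally show "exp (- (2 * (cfun k \<epsilon>)\<^sup>2 * real k)) \<le> \<epsilon> ^ 8 / 65536" .
qed

section \<open>Exponential increments\<close>

text \<open>One factor of the exponential supermartingale: \<open>x\<close> is the past, \<open>a\<close> the next symbol, and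
  \<open>d x \<in> {0, 1}\<close> decides whether this time step is counted.\<close>

definition exp_incr ::
  "((nat \<Rightarrow> 'a) \<Rightarrow> 'a \<Rightarrow> real) \<Rightarrow> real \<Rightarrow> 'a set \<Rightarrow> ((nat \<Rightarrow> 'a) \<Rightarrow> real) \<Rightarrow> (nat \<Rightarrow> 'a) \<Rightarrow> 'a \<Rightarrow> real"
  where "exp_incr pl t S d x a = exp (t * d x * (indicator S a - pset pl S x) - t\<^sup>2 * d x / 8)"

lemma exp_incr_pos: "0 < exp_incr pl t S d x a"
  by (simp add: exp_incr_def)

lemma prod_exp_incr:
  assumes "finite I"
  shows "(\<Prod>i\<in>I. exp_incr pl t S (d i) (x i) (a i))
       = exp (t * (\<Sum>i\<in>I. d i (x i) * (indicator S (a i) - pset pl S (x i)))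
              - t\<^sup>2 * (\<Sum>i\<in>I. d i (x i)) / 8)"
proof -
  have "(\<Prod>i\<in>I. exp_incr pl t S (d i) (x i) (a i))
      = exp (\<Sum>i\<in>I. t * d i (x i) * (indicator S (a i) - pset pl S (x i)) - t\<^sup>2 * d i (x i) / 8)"
    unfolding exp_incr_def using assms by (rule exp_sum[symmetric])
  also have "\<dots> = exp (t * (\<Sum>i\<in>I. d i (x i) * (indicator S (a i) - pset pl S (x i)))
                       - t\<^sup>2 * (\<Sum>i\<in>I. d i (x i)) / 8)"
    by (simp add: sum_subtractf sum_distrib_left sum_divide_distrib mult.assoc)
  finally show ?thesis .
qed

lemma exists_tilt_ge:
  fixes A B N c :: real
  assumes "0 \<le> c" and "N * c < \<bar>A - B\<bar>"
  shows "\<exists>t. (t = 4 * c \<or> t = - 4 * c) \<and> 2 * c\<^sup>2 * N \<le> t * (A - B) - t\<^sup>2 * N / 8"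
proof (cases "0 \<le> A - B")
  case True
  then have "4 * c * (N * c) \<le> 4 * c * (A - B)"
    using assms by (intro mult_left_mono) auto
  then show ?thesis
    by (intro exI[of _ "4 * c"]) (simp add: power2_eq_square algebra_simps)
next
  case False
  then have "4 * c * (N * c) \<le> 4 * c * (B - A)"
    using assms by (intro mult_left_mono) auto
  then show ?thesis
    by (intro exI[of _ "- 4 * c"]) (simp add: power2_eq_square algebra_simps)
qed

section \<open>Occurrences of a word\<close>

lemma occ_at_snoc:
  assumes "1 \<le> i"
  shows "occ_at X l \<omega> (w @ [a]) i \<longleftrightarrow> occ_at X l \<omega> w (i - 1) \<and> X l (int i) \<omega> = a"
proof -
  have "occ_at X l \<omega> (w @ [a]) i \<longleftrightarrow>
     (\<forall>k<Suc (length w). X l (int i - int (length w) + int k) \<omega> = (w @ [a]) ! k)"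
    by (simp add: occ_at_def algebra_simps)
  also have "\<dots> \<longleftrightarrow>
     (\<forall>k<length w. X l (int i - int (length w) + int k) \<omega> = w ! k) \<and> X l (int i) \<omega> = a"
    by (auto simp: less_Suc_eq nth_append)
  also have "(\<forall>k<length w. X l (int i - int (length w) + int k) \<omega> = w ! k)
      \<longleftrightarrow> occ_at X l \<omega> w (i - 1)"
    using assms by (simp add: occ_at_def algebra_simps)
  finally show ?thesis .
qed

lemma Ncount_real:
  "real (Ncount X l \<omega> j w) = (\<Sum>i\<in>{length w..j}. if occ_at X l \<omega> w i then 1 else 0)"
proof -
  have N: "Ncount X l \<omega> j w = (\<Sum>i\<in>{length w..j}. if occ_at X l \<omega> w i then 1 else 0)"
    unfolding Ncount_def card_eq_sum by (rule sum.inter_filter) simp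
  show ?thesis
    unfolding N of_nat_sum by (intro sum.cong) auto
qed

lemma Ncount_le:
  assumes "1 \<le> n"
  shows "Ncount X l \<omega> (n - 1) w \<le> n"
proof -
  have "Ncount X l \<omega> (n - 1) w \<le> card {length w..n - 1}"
    unfolding Ncount_def by (intro card_mono) auto
  also have "\<dots> \<le> n"
    using assms by simp
  finally show ?thesis .
qed

definition occ_ind :: "(nat \<Rightarrow> int \<Rightarrow> 'b \<Rightarrow> 'a) \<Rightarrow> nat \<Rightarrow> 'b \<Rightarrow> 'a list \<Rightarrow> nat \<Rightarrow> real" where
  "occ_ind X l \<omega> w i = (if length w + 1 \<le> i \<and> occ_at X l \<omega> w (i - 1) then 1 else 0)"

lemma occ_ind_01: "0 \<le> occ_ind X l \<omega> w i" "occ_ind X l \<omega> w i \<le> 1"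
  by (simp_all add: occ_ind_def)

lemma sum_occ_ind:
  "(\<Sum>i\<in>{1..n}. occ_ind X l \<omega> w i * f i)
     = (\<Sum>i = length w + 1..n. (if occ_at X l \<omega> w (i - 1) then 1 else 0) * f i)"
proof -
  have "(\<Sum>i\<in>{1..n}. occ_ind X l \<omega> w i * f i)
      = (\<Sum>i\<in>{1..n}. if length w + 1 \<le> i then (if occ_at X l \<omega> w (i - 1) then 1 else 0) * f i else 0)"
    by (intro sum.cong) (auto simp: occ_ind_def)
  also have "\<dots> = (\<Sum>i\<in>{i \<in> {1..n}. length w + 1 \<le> i}. (if occ_at X l \<omega> w (i - 1) then 1 else 0) * f i)"
    by (rule sum.inter_filter[symmetric]) simp
  also have "{i \<in> {1..n}. length w + 1 \<le> i} = {length w + 1..n}"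
    by auto
  finally show ?thesis .
qed

lemma Ncount_eq_sum_occ_ind:
  assumes "1 \<le> n"
  shows "real (Ncount X l \<omega> (n - 1) w) = (\<Sum>i\<in>{1..n}. occ_ind X l \<omega> w i)"
proof -
  have "real (Ncount X l \<omega> (n - 1) w)
      = (\<Sum>i\<in>{Suc (length w)..Suc (n - 1)}. if occ_at X l \<omega> w (i - 1) then 1 else 0)"
    by (simp only: Ncount_real sum.shift_bounds_cl_Suc_ivl diff_Suc_1)
  also have "\<dots> = (\<Sum>i = length w + 1..n. (if occ_at X l \<omega> w (i - 1) then 1 else 0) * 1)"
    using assms by simp
  also have "\<dots> = (\<Sum>i\<in>{1..n}. occ_ind X l \<omega> w i * 1)"
    by (rule sum_occ_ind[symmetric])
  finally show ?thesis
    by simp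
qed

lemma sum_Ncount_snoc:
  fixes X :: "nat \<Rightarrow> int \<Rightarrow> 'b \<Rightarrow> 'a::finite"
  shows "(\<Sum>a\<in>S. real (Ncount X l \<omega> n (w @ [a])))
     = (\<Sum>i\<in>{1..n}. occ_ind X l \<omega> w i * indicator S (X l (int i) \<omega>))"
proof -
  have "(\<Sum>a\<in>S. real (Ncount X l \<omega> n (w @ [a])))
      = (\<Sum>a\<in>S. \<Sum>i = length w + 1..n. if occ_at X l \<omega> w (i - 1) \<and> X l (int i) \<omega> = a then 1 else 0)"
    by (intro sum.cong refl) (auto simp: Ncount_real occ_at_snoc intro!: sum.cong)
  also have "\<dots> = (\<Sum>i = length w + 1..n. \<Sum>a\<in>S. if occ_at X l \<omega> w (i - 1) \<and> X l (int i) \<omega> = a then 1 else 0)"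
    by (rule sum.swap)
  also have "\<dots> = (\<Sum>i = length w + 1..n.
                   (if occ_at X l \<omega> w (i - 1) then 1 else 0) * indicator S (X l (int i) \<omega>))"
    by (intro sum.cong refl) (auto simp: indicator_def)
  finally show ?thesis
    by (simp only: sum_occ_ind)
qed

lemma phat_eq_sum_occ_ind:
  fixes X :: "nat \<Rightarrow> int \<Rightarrow> 'b \<Rightarrow> 'a::finite"
  shows "phat X n l \<omega> w S
     = (\<Sum>i\<in>{1..n}. occ_ind X l \<omega> w i * indicator S (X l (int i) \<omega>)) / real (Ncount X l \<omega> (n - 1) w)"
  by (simp add: phat_def sum_Ncount_snoc)

lemma pbar_eq_sum_occ_ind:
  "pbar X p n l \<omega> w S
     = (\<Sum>i\<in>{1..n}. occ_ind X l \<omega> w i * pset (p l) S (past X l (int i) \<omega>))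
       / real (Ncount X l \<omega> (n - 1) w)"
  unfolding pbar_def sum_occ_ind by simp

text \<open>Read on the past \<open>x = X\<^sup>i\<^sup>-\<^sup>1\<^sub>-\<^sub>\<infinity>\<close>, \<open>block_repeat e m i x\<close> tests whether the block of
  length \<open>m\<close> ending at time \<open>i - 1\<close> repeats the one ending at time \<open>e < i\<close>. When \<open>e\<close> is the
  first occurrence of \<open>w\<close> this is \<open>D\<^sub>i\<close>, but it no longer mentions \<open>w\<close>: only finitely many
  \<open>(e, m)\<close> arise, which is what makes the union bound finite.\<close>

definition block_repeat :: "nat \<Rightarrow> nat \<Rightarrow> nat \<Rightarrow> (nat \<Rightarrow> 'a) \<Rightarrow> real" where
  "block_repeat e m i x =
     (if e < i \<and> (\<forall>j<m. x (m - 1 - j) = x (i - 1 - e + (m - 1 - j))) then 1 else 0)"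

lemma block_repeat_01: "block_repeat e m i x \<in> {0, 1}"
  by (simp add: block_repeat_def)

lemma block_repeat_measurable:
  "block_repeat e m i \<in> borel_measurable (pastM :: (nat \<Rightarrow> 'a::countable) measure)"
proof -
  have "Measurable.pred pastM
      (\<lambda>x::nat \<Rightarrow> 'a. e < i \<and> (\<forall>j<m. x (m - 1 - j) = x (i - 1 - e + (m - 1 - j))))"
    by (intro pred_intros_logic pred_intros_countable pred_intros_imp' pred_pastM_coord_eq) simp
  then show ?thesis
    unfolding block_repeat_def pred_def by (intro measurable_If borel_measurable_const) simp_all
qed

lemma block_repeat_past:
  assumes occ: "occ_at X l \<omega> w e" and "length w \<le> e" and "e < i"
  shows "block_repeat e (length w) i (past X l (int i) \<omega>)
       = (if occ_at X l \<omega> w (i - 1) then 1 else 0)"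
proof -
  let ?m = "length w" and ?x = "past X l (int i) \<omega>"
  have "?x (?m - 1 - j) = ?x (i - 1 - e + (?m - 1 - j))
        \<longleftrightarrow> X l (int (i - 1) - int ?m + 1 + int j) \<omega> = w ! j" if j: "j < ?m" for j
  proof -
    have "?x (?m - 1 - j) = X l (int (i - 1) - int ?m + 1 + int j) \<omega>"
      using j assms by (simp add: past_def algebra_simps)
    moreover have "?x (i - 1 - e + (?m - 1 - j)) = X l (int e - int ?m + 1 + int j) \<omega>"
      using j assms by (simp add: past_def algebra_simps)
    moreover have "X l (int e - int ?m + 1 + int j) \<omega> = w ! j"
      using occ j unfolding occ_at_def by simp
    ultimately show ?thesis by simp
  qed
  then show ?thesis
    using assms by (auto simp: block_repeat_def occ_at_def)
qed

lemma occ_ind_eq_block_repeat: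
  assumes pos: "0 < Ncount X l \<omega> (n - 1) w"
    and e: "e = Min {j \<in> {length w..n - 1}. occ_at X l \<omega> w j}"
    and i: "i \<in> {1..n}"
  shows "occ_ind X l \<omega> w i = block_repeat e (length w) i (past X l (int i) \<omega>)"
proof -
  define E where "E = {j \<in> {length w..n - 1}. occ_at X l \<omega> w j}"
  have "finite E" "E \<noteq> {}"
    using pos unfolding Ncount_def E_def by (auto simp: card_gt_0_iff)
  then have "e \<in> E" and e_min: "\<And>j. j \<in> E \<Longrightarrow> e \<le> j"
    using e unfolding E_def[symmetric] by auto
  then have occ: "occ_at X l \<omega> w e" and len: "length w \<le> e"
    unfolding E_def by auto
  show ?thesis
  proof (cases "e < i")
    case True
    then show ?thesis
      using len by (simp add: block_repeat_past[OF occ len True] occ_ind_def)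
  next
    case False
    have "\<not> (length w + 1 \<le> i \<and> occ_at X l \<omega> w (i - 1))"
    proof
      assume "length w + 1 \<le> i \<and> occ_at X l \<omega> w (i - 1)"
      then have "i - 1 \<in> E"
        using i unfolding E_def by auto
      with False i e_min show False by fastforce
    qed
    with False show ?thesis
      by (simp add: occ_ind_def block_repeat_def)
  qed
qed

lemma prod_exp_incr_block_repeat:
  assumes n: "1 \<le> n" and pos: "0 < Ncount X l \<omega> (n - 1) w"
    and e: "e = Min {j \<in> {length w..n - 1}. occ_at X l \<omega> w j}"
  shows "(\<Prod>i\<in>{1..n}. exp_incr pl t S (block_repeat e (length w) i) (past X l (int i) \<omega>) (X l (int i) \<omega>))
       = exp (t * (\<Sum>i\<in>{1..n}. occ_ind X l \<omega> w i * (indicator S (X l (int i) \<omega>) - pset pl S (past X l (int i) \<omega>)))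
              - t\<^sup>2 * real (Ncount X l \<omega> (n - 1) w) / 8)"
proof -
  have repeat_eq: "block_repeat e (length w) i (past X l (int i) \<omega>) = occ_ind X l \<omega> w i"
    if "i \<in> {1..n}" for i
    using occ_ind_eq_block_repeat[OF pos e that] by simp
  have "(\<Sum>i\<in>{1..n}. block_repeat e (length w) i (past X l (int i) \<omega>)
          * (indicator S (X l (int i) \<omega>) - pset pl S (past X l (int i) \<omega>)))
      = (\<Sum>i\<in>{1..n}. occ_ind X l \<omega> w i * (indicator S (X l (int i) \<omega>) - pset pl S (past X l (int i) \<omega>)))"
    by (rule sum.cong) (simp_all only: repeat_eq)
  moreover have "(\<Sum>i\<in>{1..n}. block_repeat e (length w) i (past X l (int i) \<omega>)) = real (Ncount X l \<omega> (n - 1) w)"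
    unfolding Ncount_eq_sum_occ_ind[OF n] by (rule sum.cong) (simp_all only: repeat_eq)
  ultimately show ?thesis
    by (simp only: prod_exp_incr[OF finite_atLeastAtMost])
qed

section \<open>Conditioning on the past of a stationary source\<close>

definition past_of_seq :: "(int \<Rightarrow> 'a) \<Rightarrow> nat \<Rightarrow> 'a" where
  "past_of_seq y = (\<lambda>k. y (- 1 - int k))"

lemma measurable_past_of_seq [measurable]: "past_of_seq \<in> measurable seqM pastM"
  unfolding past_of_seq_def by (rule measurable_into_pastM) simp

lemma past_eq_past_of_seq: "past X l (int i) \<omega> = past_of_seq (\<lambda>t. X l (t + int i) \<omega>)"
  by (simp add: past_def past_of_seq_def algebra_simps)

lemma past_0_eq_past_of_seq: "past X l 0 \<omega> = past_of_seq (path X l \<omega>)"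
  by (simp add: past_def past_of_seq_def path_def algebra_simps)

lemma past_eq_shift_past:
  "i \<le> j \<Longrightarrow> past X l (int i) \<omega> = (\<lambda>k. past X l (int j) \<omega> (k + (j - i)))"
  by (auto simp: past_def algebra_simps)

lemma X_eq_past: "i < j \<Longrightarrow> X l (int i) \<omega> = past X l (int j) \<omega> (j - 1 - i)"
  by (auto simp: past_def algebra_simps)

lemma prod_eq_prod_of_later_past:
  "(\<Prod>i\<in>{1..N}. f i (past X l (int i) \<omega>) (X l (int i) \<omega>))
     = (\<Prod>i\<in>{1..N}. f i (\<lambda>k. past X l (int (Suc N)) \<omega> (k + (Suc N - i)))
                         (past X l (int (Suc N)) \<omega> (N - i)))"
proof (intro prod.cong refl)
  fix i assume "i \<in> {1..N}"
  then have "past X l (int i) \<omega> = (\<lambda>k. past X l (int (Suc N)) \<omega> (k + (Suc N - i)))"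
    and "X l (int i) \<omega> = past X l (int (Suc N)) \<omega> (N - i)"
    using past_eq_shift_past[of i "Suc N"] X_eq_past[of i "Suc N"] by auto
  then show "f i (past X l (int i) \<omega>) (X l (int i) \<omega>)
      = f i (\<lambda>k. past X l (int (Suc N)) \<omega> (k + (Suc N - i))) (past X l (int (Suc N)) \<omega> (N - i))"
    by simp
qed

lemma measurable_apply_countable:
  fixes h :: "'b \<Rightarrow> 'a::countable"
  assumes "\<And>a. (\<lambda>x. u x a) \<in> borel_measurable pastM"
    and "g \<in> measurable N pastM" and "h \<in> measurable N (count_space UNIV)"
  shows "(\<lambda>\<omega>. u (g \<omega>) (h \<omega>)) \<in> borel_measurable N"
  by (rule measurable_compose_countable[where f = "\<lambda>a \<omega>. u (g \<omega>) a"])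
     (auto intro: measurable_compose[OF assms(2) assms(1)] assms(3))

locale stationary_source = prob_space M
  for M :: "'b measure" and X :: "nat \<Rightarrow> int \<Rightarrow> 'b \<Rightarrow> 'a::finite" and l :: nat
    and pl :: "(nat \<Rightarrow> 'a) \<Rightarrow> 'a \<Rightarrow> real" +
  assumes stationary: "stationary_ergodic M X l"
    and transition: "is_transition_prob M X l pl"
begin

lemma X_measurable [measurable]: "X l t \<in> measurable M (count_space UNIV)"
  using stationary unfolding stationary_ergodic_def by auto

lemma past_measurable [measurable]: "past X l i \<in> measurable M pastM"
  unfolding past_def by (rule measurable_into_pastM) simp

lemma path_measurable [measurable]: "path X l \<in> measurable M seqM"
  unfolding path_def by (rule measurable_into_seqM) simp

lemma pl_nonneg: "0 \<le> pl x a"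
  using transition unfolding is_transition_prob_def by auto

lemma pl_sum: "(\<Sum>a\<in>UNIV. pl x a) = 1"
  using transition unfolding is_transition_prob_def by auto

lemma pl_measurable [measurable]: "(\<lambda>x. pl x a) \<in> borel_measurable pastM"
  using transition unfolding is_transition_prob_def by auto

lemma pl_le_1: "pl x a \<le> 1"
  using member_le_sum[of a UNIV "pl x"] by (simp add: pl_nonneg pl_sum)

lemma pset_nonneg: "0 \<le> pset pl S x"
  unfolding pset_def by (auto intro: sum_nonneg pl_nonneg)

lemma pset_le_1: "pset pl S x \<le> 1"
  using sum_mono2[of UNIV S "pl x"] unfolding pset_def by (simp add: pl_nonneg pl_sum)

lemma pset_measurable [measurable]: "pset pl S \<in> borel_measurable pastM"
  unfolding pset_def by measurable

lemma funpow_shift_path_measurable [measurable]: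
  "(\<lambda>\<omega>. (shift ^^ i) (path X l \<omega>)) \<in> measurable M seqM"
  by (induction i) (auto intro: measurable_compose[OF _ measurable_shift_seqM])

lemma distr_funpow_shift_path:
  "distr M seqM (\<lambda>\<omega>. (shift ^^ i) (path X l \<omega>)) = distr M seqM (path X l)"
proof (induction i)
  case (Suc i)
  have "distr M seqM (\<lambda>\<omega>. (shift ^^ Suc i) (path X l \<omega>))
      = distr (distr M seqM (\<lambda>\<omega>. (shift ^^ i) (path X l \<omega>))) seqM shift"
    by (subst distr_distr) (simp_all add: comp_def)
  also have "\<dots> = distr (distr M seqM (path X l)) seqM shift"
    by (simp add: Suc)
  also have "\<dots> = distr M seqM (\<lambda>\<omega>. shift (path X l \<omega>))"
    by (subst distr_distr) (simp_all add: comp_def)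
  also have "\<dots> = distr M seqM (path X l)"
    using stationary unfolding stationary_ergodic_def by auto
  finally show ?case .
qed simp

lemma integral_shift_invariant:
  fixes G :: "(int \<Rightarrow> 'a) \<Rightarrow> real"
  assumes [measurable]: "G \<in> borel_measurable seqM"
  shows "(\<integral>\<omega>. G (\<lambda>t. X l (t + int i) \<omega>) \<partial>M) = (\<integral>\<omega>. G (path X l \<omega>) \<partial>M)"
proof -
  have "(\<integral>\<omega>. G (\<lambda>t. X l (t + int i) \<omega>) \<partial>M) = (\<integral>\<omega>. G ((shift ^^ i) (path X l \<omega>)) \<partial>M)"
    by (simp add: funpow_shift path_def)
  also have "\<dots> = integral\<^sup>L (distr M seqM (\<lambda>\<omega>. (shift ^^ i) (path X l \<omega>))) G"
    by (rule integral_distr[symmetric]) simp_all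
  also have "\<dots> = (\<integral>\<omega>. G (path X l \<omega>) \<partial>M)"
    by (simp add: distr_funpow_shift_path integral_distr)
  finally show ?thesis .
qed

lemma distr_past_restricted_X0:
  fixes a :: 'a
  defines "E \<equiv> {\<omega> \<in> space M. X l 0 \<omega> = a}"
  shows "distr (density M (\<lambda>\<omega>. ennreal (indicator E \<omega>))) pastM (past X l 0)
       = density (distr M pastM (past X l 0)) (\<lambda>x. ennreal (pl x a))"
    (is "?\<nu>1 = ?\<nu>2")
proof (rule measure_eqI)
  fix A assume "A \<in> sets ?\<nu>1"
  then have A [measurable]: "A \<in> sets pastM"
    by simp
  have [measurable]: "E \<in> sets M"
    unfolding E_def by measurable
  have int: "integrable M (\<lambda>\<omega>. indicator A (past X l 0 \<omega>) * pl (past X l 0 \<omega>) a)"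
    by (rule integrable_const_bound[where B = 1]) (auto simp: indicator_def pl_nonneg pl_le_1)
  have "emeasure ?\<nu>1 A
      = (\<integral>\<^sup>+\<omega>. ennreal (indicator E \<omega>) * indicator (past X l 0 -` A \<inter> space M) \<omega> \<partial>M)"
    by (simp add: emeasure_distr emeasure_density)
  also have "\<dots> = emeasure M {\<omega> \<in> space M. X l 0 \<omega> = a \<and> past X l 0 \<omega> \<in> A}"
    by (subst nn_integral_indicator[symmetric], measurable)
       (intro nn_integral_cong, auto simp: E_def indicator_def)
  also have "\<dots> = ennreal (\<integral>\<omega>. indicator A (past X l 0 \<omega>) * pl (past X l 0 \<omega>) a \<partial>M)"
    using transition A unfolding is_transition_prob_def by (simp add: emeasure_eq_measure)
  also have "\<dots> = (\<integral>\<^sup>+\<omega>. ennreal (indicator A (past X l 0 \<omega>) * pl (past X l 0 \<omega>) a) \<partial>M)"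
    by (rule nn_integral_eq_integral[OF int, symmetric]) (auto simp: pl_nonneg)
  also have "\<dots> = (\<integral>\<^sup>+x. ennreal (pl x a) * indicator A x \<partial>distr M pastM (past X l 0))"
    by (subst nn_integral_distr) (auto intro!: nn_integral_cong simp: indicator_def)
  also have "\<dots> = emeasure ?\<nu>2 A"
    by (simp add: emeasure_density)
  finally show "emeasure ?\<nu>1 A = emeasure ?\<nu>2 A" .
qed simp

lemma integral_indicator_X0:
  assumes [measurable]: "v \<in> borel_measurable pastM"
  shows "(\<integral>\<omega>. indicator {\<omega> \<in> space M. X l 0 \<omega> = a} \<omega> * v (past X l 0 \<omega>) \<partial>M)
       = (\<integral>\<omega>. pl (past X l 0 \<omega>) a * v (past X l 0 \<omega>) \<partial>M)"
proof -
  define E where "E = {\<omega> \<in> space M. X l 0 \<omega> = a}"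
  have [measurable]: "E \<in> sets M"
    unfolding E_def by measurable
  have "(\<integral>\<omega>. indicator E \<omega> * v (past X l 0 \<omega>) \<partial>M)
      = integral\<^sup>L (density M (\<lambda>\<omega>. ennreal (indicator E \<omega>))) (\<lambda>\<omega>. v (past X l 0 \<omega>))"
    by (subst integral_density) auto
  also have "\<dots> = integral\<^sup>L (distr (density M (\<lambda>\<omega>. ennreal (indicator E \<omega>))) pastM (past X l 0)) v"
    by (rule integral_distr[symmetric]) auto
  also have "\<dots> = integral\<^sup>L (distr M pastM (past X l 0)) (\<lambda>x. pl x a *\<^sub>R v x)"
    unfolding E_def distr_past_restricted_X0 by (rule integral_density) (auto simp: pl_nonneg)
  also have "\<dots> = (\<integral>\<omega>. pl (past X l 0 \<omega>) a * v (past X l 0 \<omega>) \<partial>M)"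
    by (subst integral_distr) auto
  finally show ?thesis
    unfolding E_def .
qed

lemma integral_next_symbol_0:
  assumes u [measurable]: "\<And>a. (\<lambda>x. u x a) \<in> borel_measurable pastM"
    and u_bound: "\<And>x a. \<bar>u x a\<bar> \<le> B"
  shows "(\<integral>\<omega>. u (past X l 0 \<omega>) (X l 0 \<omega>) \<partial>M)
       = (\<integral>\<omega>. (\<Sum>a\<in>UNIV. pl (past X l 0 \<omega>) a * u (past X l 0 \<omega>) a) \<partial>M)"
proof -
  let ?E = "\<lambda>a. {\<omega> \<in> space M. X l 0 \<omega> = a}"
  have B: "0 \<le> B"
    using order_trans[OF abs_ge_zero u_bound] .
  have "\<bar>pl x a * u x a\<bar> \<le> 1 * B" for x a
    unfolding abs_mult
    by (intro mult_mono) (auto simp: pl_le_1 pl_nonneg intro: u_bound order_trans[OF abs_ge_zero u_bound])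
  then have int_pl: "integrable M (\<lambda>\<omega>. pl (past X l 0 \<omega>) a * u (past X l 0 \<omega>) a)" for a
    by (intro integrable_const_bound[where B = B]) auto
  have int_ind: "integrable M (\<lambda>\<omega>. indicator (?E a) \<omega> * u (past X l 0 \<omega>) a)" for a
    by (rule integrable_const_bound[where B = B]) (auto simp: indicator_def u_bound B)
  have "(\<integral>\<omega>. u (past X l 0 \<omega>) (X l 0 \<omega>) \<partial>M)
      = (\<integral>\<omega>. (\<Sum>a\<in>UNIV. indicator (?E a) \<omega> * u (past X l 0 \<omega>) a) \<partial>M)"
    by (intro Bochner_Integration.integral_cong refl)
       (simp add: indicator_def if_distrib sum.If_cases Int_def)
  also have "\<dots> = (\<Sum>a\<in>UNIV. \<integral>\<omega>. indicator (?E a) \<omega> * u (past X l 0 \<omega>) a \<partial>M)"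
    by (rule Bochner_Integration.integral_sum[OF int_ind])
  also have "\<dots> = (\<Sum>a\<in>UNIV. \<integral>\<omega>. pl (past X l 0 \<omega>) a * u (past X l 0 \<omega>) a \<partial>M)"
    by (intro sum.cong refl integral_indicator_X0) simp
  also have "\<dots> = (\<integral>\<omega>. (\<Sum>a\<in>UNIV. pl (past X l 0 \<omega>) a * u (past X l 0 \<omega>) a) \<partial>M)"
    by (rule Bochner_Integration.integral_sum[OF int_pl, symmetric])
  finally show ?thesis .
qed

lemma integral_next_symbol:
  assumes u [measurable]: "\<And>a. (\<lambda>x. u x a) \<in> borel_measurable pastM"
    and u_bound: "\<And>x a. \<bar>u x a\<bar> \<le> B"
  shows "(\<integral>\<omega>. u (past X l (int i) \<omega>) (X l (int i) \<omega>) \<partial>M)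
       = (\<integral>\<omega>. (\<Sum>a\<in>UNIV. pl (past X l (int i) \<omega>) a * u (past X l (int i) \<omega>) a) \<partial>M)"
proof -
  define G1 where "G1 y = u (past_of_seq y) (y 0)" for y :: "int \<Rightarrow> 'a"
  define G2 where "G2 y = (\<Sum>a\<in>UNIV. pl (past_of_seq y) a * u (past_of_seq y) a)" for y :: "int \<Rightarrow> 'a"
  have [measurable]: "G1 \<in> borel_measurable seqM"
    unfolding G1_def by (rule measurable_apply_countable[OF u measurable_past_of_seq measurable_seqM_coord])
  have [measurable]: "G2 \<in> borel_measurable seqM"
    unfolding G2_def
    by (intro borel_measurable_sum borel_measurable_times measurable_compose[OF measurable_past_of_seq u]
        measurable_compose[OF measurable_past_of_seq pl_measurable])
  have "(\<integral>\<omega>. u (past X l (int i) \<omega>) (X l (int i) \<omega>) \<partial>M) = (\<integral>\<omega>. G1 (\<lambda>t. X l (t + int i) \<omega>) \<partial>M)"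
    by (simp add: G1_def past_eq_past_of_seq)
  also have "\<dots> = (\<integral>\<omega>. G1 (path X l \<omega>) \<partial>M)"
    by (rule integral_shift_invariant) measurable
  also have "\<dots> = (\<integral>\<omega>. u (past X l 0 \<omega>) (X l 0 \<omega>) \<partial>M)"
    by (simp add: G1_def past_0_eq_past_of_seq path_def)
  also have "\<dots> = (\<integral>\<omega>. (\<Sum>a\<in>UNIV. pl (past X l 0 \<omega>) a * u (past X l 0 \<omega>) a) \<partial>M)"
    by (rule integral_next_symbol_0[OF u u_bound])
  also have "\<dots> = (\<integral>\<omega>. G2 (path X l \<omega>) \<partial>M)"
    by (simp add: G2_def past_0_eq_past_of_seq)
  also have "\<dots> = (\<integral>\<omega>. G2 (\<lambda>t. X l (t + int i) \<omega>) \<partial>M)"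
    by (rule integral_shift_invariant[symmetric]) measurable
  also have "\<dots> = (\<integral>\<omega>. (\<Sum>a\<in>UNIV. pl (past X l (int i) \<omega>) a * u (past X l (int i) \<omega>) a) \<partial>M)"
    by (simp add: G2_def past_eq_past_of_seq)
  finally show ?thesis .
qed

lemma integral_next_symbol_le:
  assumes u [measurable]: "\<And>a. (\<lambda>x. u x a) \<in> borel_measurable pastM"
    and u_bound: "\<And>x a. \<bar>u x a\<bar> \<le> B"
    and H [measurable]: "H \<in> borel_measurable pastM" and H_bound: "\<And>x. \<bar>H x\<bar> \<le> C"
    and mean_le: "\<And>x. (\<Sum>a\<in>UNIV. pl x a * u x a) \<le> H x"
  shows "(\<integral>\<omega>. u (past X l (int i) \<omega>) (X l (int i) \<omega>) \<partial>M) \<le> (\<integral>\<omega>. H (past X l (int i) \<omega>) \<partial>M)"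
proof -
  have "\<bar>\<Sum>a\<in>UNIV. pl x a * u x a\<bar> \<le> B" for x
  proof -
    have "\<bar>\<Sum>a\<in>UNIV. pl x a * u x a\<bar> \<le> (\<Sum>a\<in>UNIV. pl x a * B)"
      by (rule order_trans[OF sum_abs sum_mono])
         (auto simp: abs_mult pl_nonneg intro!: mult_left_mono u_bound)
    also have "\<dots> = B"
      by (simp add: sum_distrib_right[symmetric] pl_sum)
    finally show ?thesis .
  qed
  then have "integrable M (\<lambda>\<omega>. \<Sum>a\<in>UNIV. pl (past X l (int i) \<omega>) a * u (past X l (int i) \<omega>) a)"
    by (intro integrable_const_bound[where B = B]) auto
  moreover have "integrable M (\<lambda>\<omega>. H (past X l (int i) \<omega>))"
    by (intro integrable_const_bound[where B = C]) (auto simp: H_bound)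
  ultimately have "(\<integral>\<omega>. (\<Sum>a\<in>UNIV. pl (past X l (int i) \<omega>) a * u (past X l (int i) \<omega>) a) \<partial>M)
      \<le> (\<integral>\<omega>. H (past X l (int i) \<omega>) \<partial>M)"
    by (intro integral_mono mean_le)
  with integral_next_symbol[where u = u and i = i, OF u u_bound] show ?thesis
    by linarith
qed

lemma exp_incr_measurable [measurable]:
  assumes [measurable]: "d \<in> borel_measurable pastM"
  shows "(\<lambda>x. exp_incr pl t S d x a) \<in> borel_measurable pastM"
  unfolding exp_incr_def by measurable

lemma exp_incr_past_measurable:
  assumes "d \<in> borel_measurable pastM"
  shows "(\<lambda>\<omega>. exp_incr pl t S d (past X l (int i) \<omega>) (X l (int i) \<omega>)) \<in> borel_measurable M"
  by (rule measurable_apply_countable[where u = "exp_incr pl t S d",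
        OF exp_incr_measurable[OF assms] past_measurable X_measurable])

lemma exp_incr_le:
  assumes "d x \<in> {0, 1}"
  shows "exp_incr pl t S d x a \<le> exp \<bar>t\<bar>"
proof -
  have dev: "\<bar>indicator S a - pset pl S x\<bar> \<le> 1"
    using pset_nonneg[of S x] pset_le_1[of S x] by (auto simp: indicator_def)
  have "t * (indicator S a - pset pl S x) \<le> \<bar>t\<bar> * \<bar>indicator S a - pset pl S x\<bar>"
    by (metis abs_ge_self abs_mult)
  also have "\<dots> \<le> \<bar>t\<bar>"
    using mult_left_mono[OF dev, of "\<bar>t\<bar>"] by simp
  finally have tilt: "t * (indicator S a - pset pl S x) \<le> \<bar>t\<bar>" .
  have "t * d x * (indicator S a - pset pl S x) - t\<^sup>2 * d x / 8 \<le> \<bar>t\<bar>"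
  proof (cases "d x = 0")
    case False
    then have "t * d x * (indicator S a - pset pl S x) - t\<^sup>2 * d x / 8
        = t * (indicator S a - pset pl S x) - t\<^sup>2 / 8"
      using assms by simp
    with tilt zero_le_power2[of t] show ?thesis
      by linarith
  qed simp
  then show ?thesis
    by (simp add: exp_incr_def)
qed

text \<open>The supermartingale step, by Hoeffding's lemma with \<open>q = p(S | x)\<close>.\<close>

lemma exp_incr_mean_le_1:
  assumes "d x \<in> {0, 1}"
  shows "(\<Sum>a\<in>UNIV. pl x a * exp_incr pl t S d x a) \<le> 1"
proof (cases "d x = 0")
  case True
  then show ?thesis by (simp add: exp_incr_def pl_sum)
next
  case False
  then have d1: "d x = 1" using assms by auto
  define q where "q = pset pl S x"
  have "(\<Sum>a\<in>UNIV - S. pl x a) = 1 - q"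
    using sum.subset_diff[of S UNIV "pl x"] pl_sum[of x] by (simp add: q_def pset_def)
  then have split: "(\<Sum>a\<in>UNIV. pl x a * exp (t * (indicator S a - q)))
      = q * exp (t * (1 - q)) + (1 - q) * exp (- t * q)"
    using sum.subset_diff[of S UNIV "\<lambda>a. pl x a * exp (t * (indicator S a - q))"]
    by (simp add: sum_distrib_right[symmetric] q_def pset_def add.commute)
  have "(\<Sum>a\<in>UNIV. pl x a * exp_incr pl t S d x a)
      = (\<Sum>a\<in>UNIV. pl x a * exp (t * (indicator S a - q))) * exp (- t\<^sup>2 / 8)"
    by (simp add: exp_incr_def d1 q_def sum_distrib_right mult.assoc flip: exp_add)
  also have "\<dots> = (q * exp (t * (1 - q)) + (1 - q) * exp (- t * q)) * exp (- t\<^sup>2 / 8)"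
    by (simp only: split)
  also have "\<dots> \<le> exp (t\<^sup>2 / 8) * exp (- t\<^sup>2 / 8)"
    using hoeffding_two_point[of q t] pset_nonneg pset_le_1 unfolding q_def
    by (intro mult_right_mono) auto
  also have "\<dots> = 1"
    by (simp flip: exp_add)
  finally show ?thesis .
qed

lemma prod_exp_incr_bounds:
  assumes "finite I" and "\<And>i. i \<in> I \<Longrightarrow> d i (x i) \<in> {0, 1}"
  shows "0 \<le> (\<Prod>i\<in>I. exp_incr pl t S (d i) (x i) (a i))"
    and "(\<Prod>i\<in>I. exp_incr pl t S (d i) (x i) (a i)) \<le> exp \<bar>t\<bar> ^ card I"
  using assms
  by (auto intro!: prod_nonneg prod_le_power less_imp_le[OF exp_incr_pos] exp_incr_le)

lemma integral_prod_exp_incr_le_1: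
  assumes d [measurable]: "\<And>i. d i \<in> borel_measurable pastM" and d01: "\<And>i x. d i x \<in> {0, 1}"
  shows "(\<integral>\<omega>. (\<Prod>i\<in>{1..N}. exp_incr pl t S (d i) (past X l (int i) \<omega>) (X l (int i) \<omega>)) \<partial>M) \<le> 1"
proof (induction N)
  case 0
  then show ?case by (simp add: prob_space)
next
  case (Suc N)
  define H where "H x = (\<Prod>i\<in>{1..N}. exp_incr pl t S (d i) (\<lambda>k. x (k + (Suc N - i))) (x (N - i)))"
    for x :: "nat \<Rightarrow> 'a"
  have H_past: "(\<Prod>i\<in>{1..N}. exp_incr pl t S (d i) (past X l (int i) \<omega>) (X l (int i) \<omega>))
      = H (past X l (int (Suc N)) \<omega>)" for \<omega>
    unfolding H_def by (rule prod_eq_prod_of_later_past)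
  have [measurable]: "H \<in> borel_measurable pastM"
    unfolding H_def
  proof (intro borel_measurable_prod)
    fix i
    show "(\<lambda>x. exp_incr pl t S (d i) (\<lambda>k. x (k + (Suc N - i))) (x (N - i))) \<in> borel_measurable pastM"
      by (rule measurable_apply_countable[where u = "exp_incr pl t S (d i)",
            OF exp_incr_measurable[OF d] measurable_shift_past measurable_pastM_coord])
  qed
  have H_bounds: "0 \<le> H x" "H x \<le> exp \<bar>t\<bar> ^ N" for x
    using prod_exp_incr_bounds[of "{1..N}" d] d01 unfolding H_def by auto
  define u where "u x a = H x * exp_incr pl t S (d (Suc N)) x a" for x a
  have "(\<integral>\<omega>. (\<Prod>i\<in>{1..Suc N}. exp_incr pl t S (d i) (past X l (int i) \<omega>) (X l (int i) \<omega>)) \<partial>M)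
      = (\<integral>\<omega>. u (past X l (int (Suc N)) \<omega>) (X l (int (Suc N)) \<omega>) \<partial>M)"
    unfolding u_def H_past[symmetric] by (simp add: atLeastAtMostSuc_conv mult.commute)
  also have "\<dots> \<le> (\<integral>\<omega>. H (past X l (int (Suc N)) \<omega>) \<partial>M)"
  proof (rule integral_next_symbol_le[where B = "exp \<bar>t\<bar> ^ N * exp \<bar>t\<bar>" and C = "exp \<bar>t\<bar> ^ N"])
    show "\<bar>u x a\<bar> \<le> exp \<bar>t\<bar> ^ N * exp \<bar>t\<bar>" for x a
      using H_bounds[of x] exp_incr_pos[of pl t S "d (Suc N)" x a]
      by (auto simp: u_def abs_mult intro!: mult_mono exp_incr_le d01)
    show "(\<Sum>a\<in>UNIV. pl x a * u x a) \<le> H x" for x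
      using mult_left_mono[OF exp_incr_mean_le_1[OF d01] H_bounds(1), of x]
      by (simp add: u_def sum_distrib_left algebra_simps)
  qed (use H_bounds in \<open>auto simp: u_def\<close>)
  also have "\<dots> \<le> 1"
    using Suc by (simp only: H_past[symmetric])
  finally show ?case .
qed

lemma prob_prod_exp_incr_ge:
  assumes d [measurable]: "\<And>i. d i \<in> borel_measurable pastM" and d01: "\<And>i x. d i x \<in> {0, 1}"
  shows "prob {\<omega> \<in> space M. exp K \<le> (\<Prod>i\<in>{1..N}. exp_incr pl t S (d i) (past X l (int i) \<omega>) (X l (int i) \<omega>))}
       \<le> exp (- K)"
proof -
  define Z where "Z \<omega> = (\<Prod>i\<in>{1..N}. exp_incr pl t S (d i) (past X l (int i) \<omega>) (X l (int i) \<omega>))"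
    for \<omega>
  have Z_bounds: "0 \<le> Z \<omega>" "Z \<omega> \<le> exp \<bar>t\<bar> ^ N" for \<omega>
    using prod_exp_incr_bounds[of "{1..N}" d] d01 unfolding Z_def by auto
  have [measurable]: "Z \<in> borel_measurable M"
    unfolding Z_def by (intro borel_measurable_prod exp_incr_past_measurable d)
  have "integrable M Z"
    by (intro integrable_const_bound[where B = "exp \<bar>t\<bar> ^ N"]) (auto simp: Z_bounds)
  then have "prob {\<omega> \<in> space M. exp K \<le> Z \<omega>} \<le> (\<integral>\<omega>. Z \<omega> \<partial>M) / exp K"
    by (rule integral_Markov_inequality_measure[where A = "space M"]) (auto simp: Z_bounds)
  also have "\<dots> \<le> 1 / exp K"
    unfolding Z_def by (intro divide_right_mono integral_prod_exp_incr_le_1 d01) auto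
  finally show ?thesis
    by (simp add: Z_def exp_minus field_simps)
qed

lemma occ_at_pred [measurable]: "Measurable.pred M (\<lambda>\<omega>. occ_at X l \<omega> w i)"
  unfolding occ_at_def by (intro pred_intros_countable pred_intros_imp' pred_count_space_const1 X_measurable)

lemma Ncount_measurable [measurable]: "(\<lambda>\<omega>. real (Ncount X l \<omega> j w)) \<in> borel_measurable M"
  unfolding Ncount_real
  by (intro borel_measurable_sum measurable_If occ_at_pred[unfolded pred_def] borel_measurable_const)

lemma dist_fam_measurable:
  assumes "p l = pl" and "finite Sfam"
  shows "(\<lambda>\<omega>. dist_fam Sfam (pbar X p n l \<omega> w) (phat X n l \<omega> w)) \<in> borel_measurable M"
proof -
  have [measurable]: "(\<lambda>\<omega>. phat X n l \<omega> w S) \<in> borel_measurable M" for S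
    unfolding phat_def by (intro borel_measurable_divide borel_measurable_sum Ncount_measurable)
  have [measurable]: "(\<lambda>\<omega>. pbar X p n l \<omega> w S) \<in> borel_measurable M" for S
    unfolding pbar_def assms(1)
    by (intro borel_measurable_times borel_measurable_divide borel_measurable_const Ncount_measurable
        borel_measurable_sum measurable_If occ_at_pred[unfolded pred_def]
        measurable_compose[OF past_measurable pset_measurable])
  show ?thesis
    unfolding dist_fam_def using assms(2)
    by (intro borel_measurable_Max borel_measurable_abs borel_measurable_diff) auto
qed

lemma conf_measurable: "(\<lambda>\<omega>. conf X n L \<delta> Sfam l \<omega> w) \<in> borel_measurable M"
  unfolding conf_def by (intro borel_measurable_min cfun_measurable Ncount_measurable borel_measurable_const)

text \<open>Only a radius \<open>c \<le> 1\<close> can be exceeded, since both estimates lie in \<open>[0, 1]\<close>.\<close>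

lemma deviation_imp_prod_exp_incr_ge:
  assumes n: "1 \<le> n" and pos: "0 < Ncount X l \<omega> (n - 1) w" and p: "p l = pl"
    and e: "e = Min {j \<in> {length w..n - 1}. occ_at X l \<omega> w j}"
    and c: "0 \<le> c" and dev: "min c 1 < \<bar>pbar X p n l \<omega> w S - phat X n l \<omega> w S\<bar>"
  shows "\<exists>\<sigma>::bool. exp (2 * c\<^sup>2 * real (Ncount X l \<omega> (n - 1) w))
     \<le> (\<Prod>i\<in>{1..n}. exp_incr pl (if \<sigma> then 4 * c else - 4 * c) S (block_repeat e (length w) i)
                        (past X l (int i) \<omega>) (X l (int i) \<omega>))"
proof -
  define N where "N = real (Ncount X l \<omega> (n - 1) w)"
  define A where "A = (\<Sum>i\<in>{1..n}. occ_ind X l \<omega> w i * indicator S (X l (int i) \<omega>))"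
  define B where "B = (\<Sum>i\<in>{1..n}. occ_ind X l \<omega> w i * pset pl S (past X l (int i) \<omega>))"
  have N_eq: "N = (\<Sum>i\<in>{1..n}. occ_ind X l \<omega> w i)"
    unfolding N_def by (rule Ncount_eq_sum_occ_ind[OF n])
  have "0 \<le> A"
    unfolding A_def by (intro sum_nonneg) (simp add: occ_ind_def)
  moreover have "A \<le> N"
    unfolding A_def N_eq by (intro sum_mono) (simp add: occ_ind_def indicator_def)
  moreover have "0 \<le> B" "B \<le> N"
    unfolding B_def N_eq using occ_ind_01 pset_nonneg pset_le_1
    by (auto intro!: sum_nonneg sum_mono mult_nonneg_nonneg mult_left_le)
  moreover have "N * min c 1 < \<bar>A - B\<bar>"
  proof -
    have "phat X n l \<omega> w S = A / N" "pbar X p n l \<omega> w S = B / N"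
      unfolding A_def B_def N_def p[symmetric] by (rule phat_eq_sum_occ_ind pbar_eq_sum_occ_ind)+
    moreover have "0 < N"
      using pos by (simp add: N_def)
    ultimately have "min c 1 < \<bar>A - B\<bar> / N"
      using dev by (simp add: diff_divide_distrib[symmetric] abs_minus_commute)
    with \<open>0 < N\<close> show ?thesis
      by (simp add: field_simps)
  qed
  ultimately have "N * c < \<bar>A - B\<bar>"
    by (cases "c \<le> 1") (auto simp: min_def)
  then obtain t where t: "t = 4 * c \<or> t = - 4 * c" and ge: "2 * c\<^sup>2 * N \<le> t * (A - B) - t\<^sup>2 * N / 8"
    using exists_tilt_ge[OF c] by blast
  have "(\<Prod>i\<in>{1..n}. exp_incr pl t S (block_repeat e (length w) i) (past X l (int i) \<omega>) (X l (int i) \<omega>))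
      = exp (t * (A - B) - t\<^sup>2 * N / 8)"
    unfolding prod_exp_incr_block_repeat[OF n pos e] A_def B_def N_def
    by (simp only: right_diff_distrib sum_subtractf)
  then have "exp (2 * c\<^sup>2 * N)
      \<le> (\<Prod>i\<in>{1..n}. exp_incr pl t S (block_repeat e (length w) i) (past X l (int i) \<omega>) (X l (int i) \<omega>))"
    using ge by simp
  moreover have "(if t = 4 * c then 4 * c else - 4 * c) = t"
    using t by auto
  ultimately show ?thesis
    unfolding N_def by (intro exI[of _ "t = 4 * c"]) (simp only:)
qed

end

section \<open>The union bound\<close>

text \<open>The index \<open>(l, S, e, m, k, \<sigma>)\<close> records the process, the set, the first occurrence and the
  length of the word, its count \<open>N\<^sub>n\<^sub>-\<^sub>1\<^sub>,\<^sub>l(w)\<close>, and the sign of the deviation.\<close>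

definition bad_event ::
  "'b measure \<Rightarrow> (nat \<Rightarrow> int \<Rightarrow> 'b \<Rightarrow> 'a) \<Rightarrow> (nat \<Rightarrow> (nat \<Rightarrow> 'a) \<Rightarrow> 'a \<Rightarrow> real) \<Rightarrow> nat \<Rightarrow> real
     \<Rightarrow> nat \<times> 'a set \<times> nat \<times> nat \<times> nat \<times> bool \<Rightarrow> 'b set" where
  "bad_event M X p n \<epsilon> = (\<lambda>(l, S, e, m, k, \<sigma>).
     {\<omega> \<in> space M. exp (2 * (cfun k \<epsilon>)\<^sup>2 * real k)
        \<le> (\<Prod>i\<in>{1..n}. exp_incr (p l) (if \<sigma> then 4 * cfun k \<epsilon> else - 4 * cfun k \<epsilon>) S
                           (block_repeat e m i) (past X l (int i) \<omega>) (X l (int i) \<omega>))})"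

definition bad_index :: "nat \<Rightarrow> nat \<Rightarrow> 'a set set \<Rightarrow> (nat \<times> 'a set \<times> nat \<times> nat \<times> nat \<times> bool) set"
  where "bad_index n L Sfam = {1..L} \<times> Sfam \<times> {..<n} \<times> {..<n} \<times> {1..n} \<times> UNIV"

lemma card_bad_index:
  "finite Sfam \<Longrightarrow> card (bad_index n L Sfam) = 2 * n * (n\<^sup>2 * card Sfam * L)"
  by (simp add: bad_index_def card_cartesian_product power2_eq_square)

locale stationary_sources =
  fixes M :: "'b measure" and X :: "nat \<Rightarrow> int \<Rightarrow> 'b \<Rightarrow> 'a::finite"
    and p :: "nat \<Rightarrow> (nat \<Rightarrow> 'a) \<Rightarrow> 'a \<Rightarrow> real" and L :: nat
  assumes source: "l \<in> {1..L} \<Longrightarrow> stationary_source M X l (p l)"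
begin

lemma
  assumes \<iota>: "\<iota> \<in> bad_index n L Sfam"
  shows bad_event_sets: "bad_event M X p n \<epsilon> \<iota> \<in> sets M"
    and measure_bad_event_le: "0 < \<epsilon> \<Longrightarrow> \<epsilon> < 1 \<Longrightarrow> measure M (bad_event M X p n \<epsilon> \<iota>) \<le> \<epsilon> ^ 8 / 65536"
proof -
  obtain l S e m k \<sigma> where \<iota>_eq: "\<iota> = (l, S, e, m, k, \<sigma>)"
    by (cases \<iota>) auto
  with \<iota> have k: "1 \<le> k" and l: "l \<in> {1..L}"
    unfolding bad_index_def by auto
  interpret stationary_source M X l "p l"
    using l by (rule source)
  show "bad_event M X p n \<epsilon> \<iota> \<in> sets M"
    unfolding bad_event_def \<iota>_eq case_prod_conv
    by (intro borel_measurable_le borel_measurable_const borel_measurable_prod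
        exp_incr_past_measurable[OF block_repeat_measurable])
  assume \<epsilon>: "0 < \<epsilon>" "\<epsilon> < 1"
  have "measure M (bad_event M X p n \<epsilon> \<iota>) \<le> exp (- (2 * (cfun k \<epsilon>)\<^sup>2 * real k))"
    unfolding bad_event_def \<iota>_eq by (simp only: case_prod_conv) (rule prob_prod_exp_incr_ge[OF block_repeat_measurable block_repeat_01])
  also have "\<dots> \<le> \<epsilon> ^ 8 / 65536"
    by (rule exp_cfun_le[OF k \<epsilon>])
  finally show "measure M (bad_event M X p n \<epsilon> \<iota>) \<le> \<epsilon> ^ 8 / 65536" .
qed

lemma Good_inf_sets:
  assumes "finite Sfam"
  shows "{\<omega> \<in> space M. Good_inf X p n L \<delta> Sfam \<omega>} \<in> sets M"
proof -
  have count_pos: "Measurable.pred M (\<lambda>\<omega>. 0 < Ncount X l \<omega> (n - 1) w)" if "l \<in> {1..L}" for l w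
  proof -
    interpret stationary_source M X l "p l"
      using that by (rule source)
    have "{\<omega> \<in> space M. 0 < real (Ncount X l \<omega> (n - 1) w)} \<in> sets M"
      by (rule borel_measurable_less[OF borel_measurable_const Ncount_measurable])
    then show ?thesis
      by (simp only: pred_def of_nat_0_less_iff)
  qed
  have ratio_le_1: "Measurable.pred M (\<lambda>\<omega>. Max ((\<lambda>l. dist_fam Sfam (pbar X p n l \<omega> w) (phat X n l \<omega> w)
      / conf X n L \<delta> Sfam l \<omega> w) ` {1..L}) \<le> 1)" for w
  proof -
    have "(\<lambda>\<omega>. Max ((\<lambda>l. dist_fam Sfam (pbar X p n l \<omega> w) (phat X n l \<omega> w)
        / conf X n L \<delta> Sfam l \<omega> w) ` {1..L})) \<in> borel_measurable M"
    proof (rule borel_measurable_Max)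
      fix l assume "l \<in> {1..L}"
      then interpret stationary_source M X l "p l"
        by (rule source)
      show "(\<lambda>\<omega>. dist_fam Sfam (pbar X p n l \<omega> w) (phat X n l \<omega> w) / conf X n L \<delta> Sfam l \<omega> w)
          \<in> borel_measurable M"
        by (intro borel_measurable_divide dist_fam_measurable conf_measurable refl assms)
    qed simp
    then show ?thesis
      unfolding pred_def by (rule borel_measurable_le[OF _ borel_measurable_const])
  qed
  have "Measurable.pred M (Good_inf X p n L \<delta> Sfam)"
    unfolding Good_inf_def
    by (intro pred_intros_countable(1) pred_intros_logic(4) pred_intros_countable_bounded(3)
        count_pos ratio_le_1)
  then show ?thesis
    by (simp only: pred_def)
qed

lemma not_Good_inf_imp_bad_event:
  assumes n: "1 \<le> n" and L: "1 \<le> L" and "finite Sfam" "Sfam \<noteq> {}"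
    and \<epsilon>: "\<epsilon> = \<delta> / (real n ^ 2 * real (card Sfam) * real L)" "0 < \<epsilon>" "\<epsilon> < 1"
    and \<omega>: "\<omega> \<in> space M" "\<not> Good_inf X p n L \<delta> Sfam \<omega>"
  shows "\<exists>\<iota>\<in>bad_index n L Sfam. \<omega> \<in> bad_event M X p n \<epsilon> \<iota>"
proof -
  obtain w l where l: "l \<in> {1..L}" and pos: "0 < Ncount X l \<omega> (n - 1) w"
    and ratio: "1 < dist_fam Sfam (pbar X p n l \<omega> w) (phat X n l \<omega> w) / conf X n L \<delta> Sfam l \<omega> w"
    using \<omega> L by (auto simp: Good_inf_def not_le Max_gr_iff)
  interpret stationary_source M X l "p l"
    using l by (rule source)
  define N where "N = Ncount X l \<omega> (n - 1) w"
  define c where "c = cfun N \<epsilon>"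
  have c_pos: "0 < c"
    unfolding c_def using cfun_pos[of N \<epsilon>] pos \<epsilon> by (simp add: N_def)
  have "conf X n L \<delta> Sfam l \<omega> w = min c 1"
    by (simp add: conf_def c_def N_def \<epsilon>)
  then have "min c 1 < dist_fam Sfam (pbar X p n l \<omega> w) (phat X n l \<omega> w)"
    using ratio c_pos by (simp add: less_divide_eq)
  then obtain S where S: "S \<in> Sfam" and dev: "min c 1 < \<bar>pbar X p n l \<omega> w S - phat X n l \<omega> w S\<bar>"
    using assms(3,4) by (auto simp: dist_fam_def Max_gr_iff)
  define e where "e = Min {j \<in> {length w..n - 1}. occ_at X l \<omega> w j}"
  have "e \<in> {j \<in> {length w..n - 1}. occ_at X l \<omega> w j}"
    unfolding e_def using pos by (intro Min_in) (auto simp: Ncount_def card_gt_0_iff)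
  then have "e < n" "length w < n"
    using n by auto
  moreover obtain \<sigma> where \<sigma>: "exp (2 * c\<^sup>2 * real N)
      \<le> (\<Prod>i\<in>{1..n}. exp_incr (p l) (if \<sigma> then 4 * c else - 4 * c) S (block_repeat e (length w) i)
                        (past X l (int i) \<omega>) (X l (int i) \<omega>))"
    using deviation_imp_prod_exp_incr_ge[OF n pos refl e_def less_imp_le[OF c_pos] dev]
    unfolding N_def by blast
  ultimately have "(l, S, e, length w, N, \<sigma>) \<in> bad_index n L Sfam"
    unfolding bad_index_def using l S pos Ncount_le[OF n] by (auto simp: N_def)
  moreover have "\<omega> \<in> bad_event M X p n \<epsilon> (l, S, e, length w, N, \<sigma>)"
    unfolding bad_event_def using \<sigma> \<omega>(1) by (cases \<sigma>) (simp_all add: c_def[symmetric])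
  ultimately show ?thesis
    by blast
qed

end

lemma union_bound_budget:
  assumes "1 \<le> n" "1 \<le> L" "1 \<le> K" "0 < \<delta>" "\<delta> < 1"
    and \<epsilon>: "\<epsilon> = \<delta> / (real n ^ 2 * real K * real L)"
  shows "0 < \<epsilon>" "\<epsilon> < 1" "real (2 * n * (n\<^sup>2 * K * L)) * (\<epsilon> ^ 8 / 65536) \<le> \<delta>"
proof -
  define D where "D = real n ^ 2 * real K * real L"
  have "real n * 1 * 1 \<le> D"
    unfolding D_def using assms(1-3) by (intro mult_mono) (auto simp: power2_eq_square)
  then have D_ge: "real n \<le> D" "1 \<le> D"
    using assms(1) by auto
  have \<epsilon>D: "\<epsilon> * D = \<delta>"
    using D_ge by (simp add: \<epsilon> D_def[symmetric])
  show "0 < \<epsilon>"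
    using assms(4) D_ge by (simp add: \<epsilon> D_def[symmetric])
  moreover have "\<epsilon> \<le> \<delta>"
    using assms(4) D_ge by (simp add: \<epsilon> D_def[symmetric] divide_le_eq)
  ultimately show "\<epsilon> < 1"
    using assms(5) by linarith
  have "real n * \<epsilon> \<le> 1"
    using mult_right_mono[OF D_ge(1) less_imp_le[OF \<open>0 < \<epsilon>\<close>]] \<epsilon>D assms(5) by (simp add: mult.commute)
  moreover have "\<epsilon> ^ 6 \<le> 1"
    using \<open>0 < \<epsilon>\<close> \<open>\<epsilon> < 1\<close> by (simp add: power_le_one)
  ultimately have small: "real n * \<epsilon> * \<epsilon> ^ 6 \<le> 1"
    using \<open>0 < \<epsilon>\<close> by (simp add: mult_le_one)
  have "real (2 * n * (n\<^sup>2 * K * L)) * (\<epsilon> ^ 8 / 65536) = 2 * (real n * \<epsilon> * \<epsilon> ^ 6) * (\<epsilon> * D) / 65536"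
    unfolding D_def by (simp add: eval_nat_numeral power2_eq_square mult_ac)
  also have "\<dots> = 2 * (real n * \<epsilon> * \<epsilon> ^ 6) * \<delta> / 65536"
    by (simp only: \<epsilon>D)
  also have "\<dots> \<le> 2 * 1 * \<delta> / 65536"
    using small assms(4) by (intro divide_right_mono mult_right_mono mult_left_mono) auto
  also have "\<dots> \<le> \<delta>"
    using assms(4) by simp
  finally show "real (2 * n * (n\<^sup>2 * K * L)) * (\<epsilon> ^ 8 / 65536) \<le> \<delta>" .
qed

theorem theorem4p1:
  fixes M :: "'b measure"
    and X :: "nat \<Rightarrow> int \<Rightarrow> 'b \<Rightarrow> 'a::finite"
    and p :: "nat \<Rightarrow> (nat \<Rightarrow> 'a) \<Rightarrow> 'a \<Rightarrow> real"
    and L n :: nat and \<delta> :: real and Sfam :: "'a set set"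
  assumes "prob_space M"
    and "L \<ge> 1" and "n \<ge> 1"
    and "\<And>l. l \<in> {1..L} \<Longrightarrow> stationary_ergodic M X l"
    and "\<And>l. l \<in> {1..L} \<Longrightarrow> is_transition_prob M X l (p l)"
    and "Sfam = {{a} | a. True} \<or> Sfam = Pow UNIV"
    and "0 < \<delta>" and "\<delta> < 1"
  shows "measure M {\<omega> \<in> space M. Good_inf X p n L \<delta> Sfam \<omega>} \<ge> 1 - \<delta>"
proof -
  interpret prob_space M
    by (rule assms(1))
  have "stationary_source M X l (p l)" if "l \<in> {1..L}" for l
    using assms(1) assms(4,5)[OF that] by (simp add: stationary_source_def stationary_source_axioms_def)
  then interpret stationary_sources M X p L
    by (rule stationary_sources.intro)
  define \<epsilon> where "\<epsilon> = \<delta> / (real n ^ 2 * real (card Sfam) * real L)"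
  define I where "I = bad_index n L Sfam"
  define G where "G = {\<omega> \<in> space M. Good_inf X p n L \<delta> Sfam \<omega>}"
  have Sfam: "finite Sfam" "Sfam \<noteq> {}"
    using assms(6) by (auto intro: finite_subset[of _ "Pow UNIV"])
  then have \<epsilon>: "0 < \<epsilon>" "\<epsilon> < 1" and budget: "real (card I) * (\<epsilon> ^ 8 / 65536) \<le> \<delta>"
    using union_bound_budget[OF assms(3,2) _ assms(7,8) \<epsilon>_def]
    by (simp_all add: I_def card_bad_index Suc_le_eq card_gt_0_iff)
  have "space M - G \<subseteq> (\<Union>\<iota>\<in>I. bad_event M X p n \<epsilon> \<iota>)"
    using not_Good_inf_imp_bad_event[OF assms(3,2) Sfam \<epsilon>_def \<epsilon>] by (auto simp: G_def I_def)
  then have "prob (space M - G) \<le> prob (\<Union>\<iota>\<in>I. bad_event M X p n \<epsilon> \<iota>)"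
    using Sfam by (intro finite_measure_mono sets.finite_UN bad_event_sets) (auto simp: I_def bad_index_def)
  also have "\<dots> \<le> (\<Sum>\<iota>\<in>I. prob (bad_event M X p n \<epsilon> \<iota>))"
    using Sfam by (intro finite_measure_subadditive_finite) (auto simp: I_def bad_index_def bad_event_sets)
  also have "\<dots> \<le> real (card I) * (\<epsilon> ^ 8 / 65536)"
    unfolding I_def by (rule sum_bounded_above) (erule measure_bad_event_le[OF _ \<epsilon>])
  finally show ?thesis
    using budget prob_compl[OF Good_inf_sets[OF Sfam(1)]] by (simp add: G_def)
qed

end
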